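(* Let $\mathcal{E}$ be a multiclass tree ensemble with classes $\{0,\dots,C-1\}$, $F\subseteq\mathcal{F}$ a set of sensitive features, $c^{(1)},c^{(2)}$ classes, and $g>0$ with $\eta=\ln g$. The set of feasible solutions of the MILP consisting of constraints (C1)–(C5) below together with (Gap-multi) equals the set of feasible solutions of the MILP obtained by additionally imposing (Aff-multi) $\sum_{n\in\mathcal{L}_{c^{(1)}}\setminus\mathcal{U}}\left(l^{(1)}_n\,n.val-l^{(2)}_n\,n.val\right)+\sum_{n\in\mathcal{L}_{c^{(2)}}\setminus\mathcal{U}}\left(l^{(2)}_n\,n.val-l^{(1)}_n\,n.val\right)>2\eta$.
   Context: A decision tree is either a leaf $n$ with real value $n.val$ or an internal node with guard $X_f<\tau$ and children $n.yes$ (taken when $x_f<\tau$) and $n.no$. A multiclass tree ensemble has its trees partitioned into sets $\mathcal{T}_0,\dots,\mathcal{T}_{C-1}$, one per class; $\mathcal{L}_c$ denotes the set of leaves of trees in $\mathcal{T}_c$, and $\mathcal{A}$ the set of all leaves. For each feature $f$, $\tau_{f1}<\dots<\tau_{fK_f}$ are the distinct thresholds of guards on $f$. For an internal node $n$, $TSet(n)$ and $FSet(n)$ are the leaves of the subtrees rooted at $n.yes$ and $n.no$. Variables: for $c\in\{1,2\}$, binary $p^{(c)}_{fk}\in\{0,1\}$ for each feature $f$ and $k\le K_f$, and continuous $0\le l^{(c)}_n\le1$ for each leaf $n$. (C1) $p^{(c)}_{f1}\le\dots\le p^{(c)}_{fK_f}$ for each $f$; (C2) for each tree, the sum of $l^{(c)}_n$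 over its leaves is $1$; (C3) for each root node with guard $X_f<\tau_{fk}$: $1-\sum_{n\in FSet}l^{(c)}_n=p^{(c)}_{fk}=\sum_{n\in TSet}l^{(c)}_n$; (C4) for each non-root internal node with guard $X_f<\tau_{fk}$: $1-\sum_{n\in FSet}l^{(c)}_n\ge p^{(c)}_{fk}\ge\sum_{n\in TSet}l^{(c)}_n$; (C5) $p^{(1)}_{fk}=p^{(2)}_{fk}$ for all $f\notin F$ and all $k$; (Gap-multi) for every class $c\ne c^{(1)}$: $\sum_{n\in\mathcal{L}_{c^{(1)}}}l^{(1)}_n\,n.val>\sum_{n\in\mathcal{L}_c}l^{(1)}_n\,n.val+\eta$, and for every class $c\ne c^{(2)}$: $\sum_{n\in\mathcal{L}_{c^{(2)}}}l^{(2)}_n\,n.val>\sum_{n\in\mathcal{L}_c}l^{(2)}_n\,n.val+\eta$. A leaf is unaffected if no guard on the path from its tree's root to it involves a feature of $F$; $\mathcal{U}$ is the set of unaffected leaves. *)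

theory Defs
  imports Complex_Main "HOL-Library.Sublist"
begin

text \<open>Decision trees: a leaf carries a real value; an internal node
  \<open>Node f \<tau> yes no\<close> has guard \<open>X_f < \<tau>\<close>, child \<open>yes\<close> taken when \<open>x_f < \<tau>\<close>.\<close>
datatype dtree = Leaf real | Node nat real dtree dtree

text \<open>Positions in a tree are paths (True = yes-branch, False = no-branch).\<close>
fun leaf_paths :: "dtree \<Rightarrow> bool list set" where
  "leaf_paths (Leaf v) = {[]}"
| "leaf_paths (Node f \<tau> y n) = Cons True ` leaf_paths y \<union> Cons False ` leaf_paths n"

fun internal_paths :: "dtree \<Rightarrow> bool list set" where
  "internal_paths (Leaf v) = {}"
| "internal_paths (Node f \<tau> y n) =
     {[]} \<union> Cons True ` internal_paths y \<union> Cons False ` internal_paths n"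

fun subtree_at :: "dtree \<Rightarrow> bool list \<Rightarrow> dtree" where
  "subtree_at t [] = t"
| "subtree_at (Node f \<tau> y n) (b # ps) = subtree_at (if b then y else n) ps"
| "subtree_at (Leaf v) (b # ps) = Leaf v"

text \<open>An ensemble is a list of trees, each tagged with its class.
  A leaf is identified by (index of its tree, path to it).\<close>
type_synonym ensemble = "(nat \<times> dtree) list"
type_synonym leaf = "nat \<times> bool list"

definition tree_of :: "ensemble \<Rightarrow> nat \<Rightarrow> dtree" where
  "tree_of E i = snd (E ! i)"

definition leaf_val :: "ensemble \<Rightarrow> leaf \<Rightarrow> real" where
  "leaf_val E n = (case subtree_at (tree_of E (fst n)) (snd n) of Leaf v \<Rightarrow> v | _ \<Rightarrow> 0)"

definition tree_leaves :: "ensemble \<Rightarrow> nat \<Rightarrow> leaf set" where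
  "tree_leaves E i = (\<lambda>ps. (i, ps)) ` leaf_paths (tree_of E i)"

definition all_leaves :: "ensemble \<Rightarrow> leaf set" where
  "all_leaves E = (\<Union>i<length E. tree_leaves E i)"

definition class_leaves :: "ensemble \<Rightarrow> nat \<Rightarrow> leaf set" where
  "class_leaves E c = (\<Union>i\<in>{i. i < length E \<and> fst (E ! i) = c}. tree_leaves E i)"

definition TSet :: "ensemble \<Rightarrow> nat \<Rightarrow> bool list \<Rightarrow> leaf set" where
  "TSet E i q = {(i, ps) | ps. ps \<in> leaf_paths (tree_of E i) \<and> prefix (q @ [True]) ps}"

definition FSet :: "ensemble \<Rightarrow> nat \<Rightarrow> bool list \<Rightarrow> leaf set" where
  "FSet E i q = {(i, ps) | ps. ps \<in> leaf_paths (tree_of E i) \<and> prefix (q @ [False]) ps}"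

text \<open>Thresholds of guards on feature f (the \<open>\<tau>_{f1} < ... < \<tau>_{fK_f}\<close>);
  the variable \<open>p_{fk}\<close> is indexed by the threshold value \<open>\<tau>_{fk}\<close> itself.\<close>
definition thresholds :: "ensemble \<Rightarrow> nat \<Rightarrow> real set" where
  "thresholds E f = {\<tau>. \<exists>i q y n. i < length E \<and> q \<in> internal_paths (tree_of E i) \<and>
                          subtree_at (tree_of E i) q = Node f \<tau> y n}"

definition single_copy_constraints ::
  "ensemble \<Rightarrow> (nat \<Rightarrow> real \<Rightarrow> real) \<Rightarrow> (leaf \<Rightarrow> real) \<Rightarrow> bool" where
  "single_copy_constraints E p l \<longleftrightarrow>
     (\<forall>f. \<forall>\<tau>\<in>thresholds E f. p f \<tau> \<in> {0, 1}) \<and>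
     (\<forall>n\<in>all_leaves E. 0 \<le> l n \<and> l n \<le> 1) \<and>
     \<comment> \<open>(C1)\<close>
     (\<forall>f. \<forall>\<tau>\<in>thresholds E f. \<forall>\<tau>'\<in>thresholds E f. \<tau> \<le> \<tau>' \<longrightarrow> p f \<tau> \<le> p f \<tau>') \<and>
     \<comment> \<open>(C2)\<close>
     (\<forall>i<length E. (\<Sum>n\<in>tree_leaves E i. l n) = 1) \<and>
     \<comment> \<open>(C3)\<close>
     (\<forall>i<length E. \<forall>f \<tau> y n. tree_of E i = Node f \<tau> y n \<longrightarrow>
        1 - (\<Sum>m\<in>FSet E i []. l m) = p f \<tau> \<and> p f \<tau> = (\<Sum>m\<in>TSet E i []. l m)) \<and>
     \<comment> \<open>(C4)\<close>
     (\<forall>i<length E. \<forall>q\<in>internal_paths (tree_of E i). \<forall>f \<tau> y n.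
        q \<noteq> [] \<longrightarrow> subtree_at (tree_of E i) q = Node f \<tau> y n \<longrightarrow>
        1 - (\<Sum>m\<in>FSet E i q. l m) \<ge> p f \<tau> \<and> p f \<tau> \<ge> (\<Sum>m\<in>TSet E i q. l m))"

definition link_constraint ::
  "ensemble \<Rightarrow> nat set \<Rightarrow> (nat \<Rightarrow> real \<Rightarrow> real) \<Rightarrow> (nat \<Rightarrow> real \<Rightarrow> real) \<Rightarrow> bool" where
  "link_constraint E F p1 p2 \<longleftrightarrow>
     (\<forall>f. f \<notin> F \<longrightarrow> (\<forall>\<tau>\<in>thresholds E f. p1 f \<tau> = p2 f \<tau>))"

definition gap_multi ::
  "ensemble \<Rightarrow> nat \<Rightarrow> nat \<Rightarrow> real \<Rightarrow> (leaf \<Rightarrow> real) \<Rightarrow> bool" where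
  "gap_multi E C c0 \<eta> l \<longleftrightarrow>
     (\<forall>c<C. c \<noteq> c0 \<longrightarrow>
        (\<Sum>n\<in>class_leaves E c0. l n * leaf_val E n) >
        (\<Sum>n\<in>class_leaves E c. l n * leaf_val E n) + \<eta>)"

definition guard_feature :: "dtree \<Rightarrow> nat" where
  "guard_feature t = (case t of Node f \<tau> y n \<Rightarrow> f | Leaf v \<Rightarrow> 0)"

definition unaffected :: "ensemble \<Rightarrow> nat set \<Rightarrow> leaf set" where
  "unaffected E F = {(i, ps) \<in> all_leaves E.
      \<forall>j<length ps. guard_feature (subtree_at (tree_of E i) (take j ps)) \<notin> F}"

definition milp_base ::
  "ensemble \<Rightarrow> nat \<Rightarrow> nat set \<Rightarrow> nat \<Rightarrow> nat \<Rightarrow> real \<Rightarrow>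
   (nat \<Rightarrow> real \<Rightarrow> real) \<Rightarrow> (nat \<Rightarrow> real \<Rightarrow> real) \<Rightarrow> (leaf \<Rightarrow> real) \<Rightarrow> (leaf \<Rightarrow> real) \<Rightarrow> bool" where
  "milp_base E C F c1 c2 \<eta> p1 p2 l1 l2 \<longleftrightarrow>
     single_copy_constraints E p1 l1 \<and> single_copy_constraints E p2 l2 \<and>
     link_constraint E F p1 p2 \<and> gap_multi E C c1 \<eta> l1 \<and> gap_multi E C c2 \<eta> l2"

definition aff_multi ::
  "ensemble \<Rightarrow> nat set \<Rightarrow> nat \<Rightarrow> nat \<Rightarrow> real \<Rightarrow> (leaf \<Rightarrow> real) \<Rightarrow> (leaf \<Rightarrow> real) \<Rightarrow> bool" where
  "aff_multi E F c1 c2 \<eta> l1 l2 \<longleftrightarrow>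
     (\<Sum>n\<in>class_leaves E c1 - unaffected E F. l1 n * leaf_val E n - l2 n * leaf_val E n) +
     (\<Sum>n\<in>class_leaves E c2 - unaffected E F. l2 n * leaf_val E n - l1 n * leaf_val E n)
     > 2 * \<eta>"

end

theory Submission
  imports Defs
begin

text \<open>Since the \<open>p\<close>-variables are 0/1, constraints (C2)--(C4) force \<open>l\<close> to be the indicator
  of the leaves selected by \<open>p\<close>: a leaf whose path takes the branch at some guard \<open>X_f < \<tau>\<close>
  that disagrees with \<open>p f \<tau>\<close> lies in a TSet or FSet whose total weight is bounded by \<open>0\<close>,
  and (C2) gives the unique remaining leaf of the tree weight \<open>1\<close>. The path of an unaffected
  leaf only tests features outside \<open>F\<close>, on which the two copies agree by (C5), so
  \<open>l\<^sub>1 = l\<^sub>2\<close> on unaffected leaves. Adding the gap inequality of copy 1 against class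
  \<open>c\<^sub>2\<close> to that of copy 2 against class \<open>c\<^sub>1\<close>, the unaffected terms cancel and what
  remains is (Aff-multi).\<close>

lemma finite_leaf_paths: "finite (leaf_paths t)"
  by (induction t) auto

lemma leaf_path_prefix_is_node:
  assumes "ps \<in> leaf_paths t" "j < length ps"
  shows "take j ps \<in> internal_paths t \<and> (\<exists>f \<tau> y n. subtree_at t (take j ps) = Node f \<tau> y n)"
  using assms
proof (induction t arbitrary: ps j)
  case (Node f \<tau> y n)
  then show ?case by (cases j) (auto simp: take_Cons')
qed simp

lemma leaf_paths_diverge:
  assumes "ps \<in> leaf_paths t" "ps' \<in> leaf_paths t" "ps \<noteq> ps'"
  shows "\<exists>j<length ps. j < length ps' \<and> take j ps = take j ps' \<and> ps ! j \<noteq> ps' ! j"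
  using assms
proof (induction t arbitrary: ps ps')
  case (Node f \<tau> y n)
  then obtain b xs b' xs' where ps: "ps = b # xs" and ps': "ps' = b' # xs'"
    by auto
  show ?case
  proof (cases "b = b'")
    case False
    then show ?thesis using ps ps' by (intro exI[of _ 0]) auto
  next
    case True
    with Node.prems ps ps' have "xs \<noteq> xs'"
      and "xs \<in> leaf_paths y \<and> xs' \<in> leaf_paths y \<or> xs \<in> leaf_paths n \<and> xs' \<in> leaf_paths n"
      by (cases b; auto)+
    then obtain j where "j < length xs" "j < length xs'" "take j xs = take j xs'" "xs ! j \<noteq> xs' ! j"
      using Node.IH by blast
    then show ?thesis using ps ps' True by (intro exI[of _ "Suc j"]) auto
  qed
qed simp

text \<open>The path \<open>ps\<close> is the one taken by an input \<open>x\<close> with \<open>x\<^sub>f < \<tau> \<longleftrightarrow> p f \<tau> = 1\<close>.\<close>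
definition follows_guards :: "(nat \<Rightarrow> real \<Rightarrow> real) \<Rightarrow> dtree \<Rightarrow> bool list \<Rightarrow> bool" where
  "follows_guards p t ps \<longleftrightarrow>
     (\<forall>j<length ps. \<forall>f \<tau> y n. subtree_at t (take j ps) = Node f \<tau> y n \<longrightarrow> (ps ! j \<longleftrightarrow> p f \<tau> = 1))"

lemma follows_guards_unique:
  assumes "ps \<in> leaf_paths t" "ps' \<in> leaf_paths t" "follows_guards p t ps" "follows_guards p t ps'"
  shows "ps = ps'"
proof (rule ccontr)
  assume "ps \<noteq> ps'"
  then obtain j where j: "j < length ps" "j < length ps'" "take j ps = take j ps'" "ps ! j \<noteq> ps' ! j"
    using leaf_paths_diverge assms(1,2) by blast
  obtain f \<tau> y n where "subtree_at t (take j ps) = Node f \<tau> y n"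
    using leaf_path_prefix_is_node[OF assms(1) j(1)] by blast
  then show False using assms(3,4) j unfolding follows_guards_def by metis
qed

lemma finite_tree_leaves: "finite (tree_leaves E i)"
  unfolding tree_leaves_def by (simp add: finite_leaf_paths)

lemma finite_class_leaves: "finite (class_leaves E c)"
  unfolding class_leaves_def by (auto simp: finite_tree_leaves)

lemma leaf_in_tree_leaves: "ps \<in> leaf_paths (tree_of E i) \<Longrightarrow> (i, ps) \<in> tree_leaves E i"
  unfolding tree_leaves_def by simp

lemma tree_leaves_subset_all_leaves: "i < length E \<Longrightarrow> tree_leaves E i \<subseteq> all_leaves E"
  unfolding all_leaves_def by auto

lemma TSet_subset_tree_leaves: "TSet E i q \<subseteq> tree_leaves E i"
  unfolding TSet_def tree_leaves_def by auto

lemma FSet_subset_tree_leaves: "FSet E i q \<subseteq> tree_leaves E i"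
  unfolding FSet_def tree_leaves_def by auto

lemma node_guard_in_thresholds:
  "i < length E \<Longrightarrow> q \<in> internal_paths (tree_of E i) \<Longrightarrow>
   subtree_at (tree_of E i) q = Node f \<tau> y n \<Longrightarrow> \<tau> \<in> thresholds E f"
  unfolding thresholds_def by blast

lemma single_copy_threshold_binary:
  "single_copy_constraints E p l \<Longrightarrow> \<tau> \<in> thresholds E f \<Longrightarrow> p f \<tau> \<in> {0, 1}"
  unfolding single_copy_constraints_def by simp

lemma single_copy_tree_weight_sum:
  "single_copy_constraints E p l \<Longrightarrow> i < length E \<Longrightarrow> sum l (tree_leaves E i) = 1"
  unfolding single_copy_constraints_def by simp

lemma single_copy_weight_nonneg:
  assumes "single_copy_constraints E p l" "i < length E" "m \<in> tree_leaves E i"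
  shows "0 \<le> l m"
proof -
  have "m \<in> all_leaves E" using assms(2,3) tree_leaves_subset_all_leaves by blast
  with assms(1) show ?thesis unfolding single_copy_constraints_def by simp
qed

lemma single_copy_weight_le_sum:
  assumes "single_copy_constraints E p l" "i < length E" "S \<subseteq> tree_leaves E i" "m \<in> S"
  shows "l m \<le> sum l S"
proof -
  have "finite S" using assms(3) finite_tree_leaves by (rule finite_subset)
  moreover have "0 \<le> l x" if "x \<in> S" for x
    using single_copy_weight_nonneg[OF assms(1,2)] assms(3) that by blast
  ultimately show ?thesis using assms(4) by (intro member_le_sum) auto
qed

lemma single_copy_branch_bounds:
  assumes sc: "single_copy_constraints E p l" and i: "i < length E"
    and q: "q \<in> internal_paths (tree_of E i)" and node: "subtree_at (tree_of E i) q = Node f \<tau> y n"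
  shows "sum l (TSet E i q) \<le> p f \<tau> \<and> sum l (FSet E i q) \<le> 1 - p f \<tau>"
proof -
  have C3: "\<forall>i<length E. \<forall>f \<tau> y n. tree_of E i = Node f \<tau> y n \<longrightarrow>
      1 - sum l (FSet E i []) = p f \<tau> \<and> p f \<tau> = sum l (TSet E i [])"
    using sc unfolding single_copy_constraints_def by (elim conjE) assumption
  have C4: "\<forall>i<length E. \<forall>q\<in>internal_paths (tree_of E i). \<forall>f \<tau> y n.
      q \<noteq> [] \<longrightarrow> subtree_at (tree_of E i) q = Node f \<tau> y n \<longrightarrow>
      1 - sum l (FSet E i q) \<ge> p f \<tau> \<and> p f \<tau> \<ge> sum l (TSet E i q)"
    using sc unfolding single_copy_constraints_def by (elim conjE) assumption
  show ?thesis
  proof (cases "q = []")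
    case True
    with node have "tree_of E i = Node f \<tau> y n" by simp
    with C3 i True show ?thesis by fastforce
  next
    case False
    with C4 i q node show ?thesis by fastforce
  qed
qed

lemma single_copy_weight_off_path:
  assumes sc: "single_copy_constraints E p l" and i: "i < length E"
    and ps: "ps \<in> leaf_paths (tree_of E i)" and off: "\<not> follows_guards p (tree_of E i) ps"
  shows "l (i, ps) = 0"
proof -
  from off obtain j f \<tau> y n where j: "j < length ps"
    and node: "subtree_at (tree_of E i) (take j ps) = Node f \<tau> y n"
    and wrong: "ps ! j \<longleftrightarrow> p f \<tau> \<noteq> 1"
    unfolding follows_guards_def by blast
  have q: "take j ps \<in> internal_paths (tree_of E i)"
    using leaf_path_prefix_is_node[OF ps j] by simp
  have p01: "p f \<tau> \<in> {0, 1}"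
    using single_copy_threshold_binary[OF sc node_guard_in_thresholds[OF i q node]] .
  have bounds: "sum l (TSet E i (take j ps)) \<le> p f \<tau>" "sum l (FSet E i (take j ps)) \<le> 1 - p f \<tau>"
    using single_copy_branch_bounds[OF sc i q node] by auto
  have branch: "prefix (take j ps @ [ps ! j]) ps"
    using j by (metis take_Suc_conv_app_nth take_is_prefix)
  have nonneg: "0 \<le> l (i, ps)"
    using single_copy_weight_nonneg[OF sc i leaf_in_tree_leaves[OF ps]] .
  show ?thesis
  proof (cases "ps ! j")
    case True
    with ps branch have "(i, ps) \<in> TSet E i (take j ps)" unfolding TSet_def by auto
    then have "l (i, ps) \<le> sum l (TSet E i (take j ps))"
      by (rule single_copy_weight_le_sum[OF sc i TSet_subset_tree_leaves])
    moreover have "p f \<tau> = 0" using True wrong p01 by auto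
    ultimately show ?thesis using bounds(1) nonneg by linarith
  next
    case False
    with ps branch have "(i, ps) \<in> FSet E i (take j ps)" unfolding FSet_def by auto
    then have "l (i, ps) \<le> sum l (FSet E i (take j ps))"
      by (rule single_copy_weight_le_sum[OF sc i FSet_subset_tree_leaves])
    moreover have "p f \<tau> = 1" using False wrong p01 by auto
    ultimately show ?thesis using bounds(2) nonneg by linarith
  qed
qed

lemma single_copy_weight_on_path:
  assumes sc: "single_copy_constraints E p l" and i: "i < length E"
    and ps: "ps \<in> leaf_paths (tree_of E i)" and on: "follows_guards p (tree_of E i) ps"
  shows "l (i, ps) = 1"
proof -
  have others: "sum l (tree_leaves E i - {(i, ps)}) = 0"
  proof (rule sum.neutral, rule ballI)
    fix m assume m: "m \<in> tree_leaves E i - {(i, ps)}"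
    then obtain ps' where m': "m = (i, ps')" "ps' \<in> leaf_paths (tree_of E i)" "ps' \<noteq> ps"
      unfolding tree_leaves_def by auto
    then have "\<not> follows_guards p (tree_of E i) ps'"
      using follows_guards_unique ps on by blast
    then show "l m = 0" using single_copy_weight_off_path[OF sc i m'(2)] m'(1) by simp
  qed
  have "1 = sum l (tree_leaves E i)"
    using single_copy_tree_weight_sum[OF sc i] by simp
  also have "\<dots> = l (i, ps) + sum l (tree_leaves E i - {(i, ps)})"
    using sum.remove[OF finite_tree_leaves leaf_in_tree_leaves[OF ps]] .
  finally show ?thesis using others by simp
qed

lemma single_copy_weight:
  assumes "single_copy_constraints E p l" "i < length E" "ps \<in> leaf_paths (tree_of E i)"
  shows "l (i, ps) = (if follows_guards p (tree_of E i) ps then 1 else 0)"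
  using single_copy_weight_on_path[OF assms] single_copy_weight_off_path[OF assms] by simp

lemma unaffected_weights_agree:
  assumes sc1: "single_copy_constraints E p1 l1" and sc2: "single_copy_constraints E p2 l2"
    and link: "link_constraint E F p1 p2" and u: "(i, ps) \<in> unaffected E F"
  shows "l1 (i, ps) = l2 (i, ps)"
proof -
  from u have i: "i < length E" and ps: "ps \<in> leaf_paths (tree_of E i)"
    and guards: "\<forall>j<length ps. guard_feature (subtree_at (tree_of E i) (take j ps)) \<notin> F"
    unfolding unaffected_def all_leaves_def tree_leaves_def by auto
  have "p1 f \<tau> = p2 f \<tau>"
    if j: "j < length ps" and node: "subtree_at (tree_of E i) (take j ps) = Node f \<tau> y n"
    for j f \<tau> y n
  proof -
    have "f \<notin> F" using guards j node unfolding guard_feature_def by force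
    moreover have "\<tau> \<in> thresholds E f"
      using node_guard_in_thresholds[OF i _ node] leaf_path_prefix_is_node[OF ps j] by blast
    ultimately show ?thesis using link unfolding link_constraint_def by blast
  qed
  then have "follows_guards p1 (tree_of E i) ps = follows_guards p2 (tree_of E i) ps"
    unfolding follows_guards_def by metis
  then show ?thesis
    using single_copy_weight[OF sc1 i ps] single_copy_weight[OF sc2 i ps] by simp
qed

lemma sum_class_leaves_eq_sum_affected:
  assumes "\<And>m. m \<in> unaffected E F \<Longrightarrow> l1 m = l2 m"
  shows "(\<Sum>m\<in>class_leaves E c. l1 m * leaf_val E m - l2 m * leaf_val E m) =
         (\<Sum>m\<in>class_leaves E c - unaffected E F. l1 m * leaf_val E m - l2 m * leaf_val E m)"
  using assms by (intro sum.mono_neutral_right finite_class_leaves) auto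

lemma milp_base_imp_aff_multi:
  assumes base: "milp_base E C F c1 c2 \<eta> p1 p2 l1 l2"
    and c1: "c1 < C" and c2: "c2 < C" and distinct: "c1 \<noteq> c2"
  shows "aff_multi E F c1 c2 \<eta> l1 l2"
proof -
  have sc1: "single_copy_constraints E p1 l1" and sc2: "single_copy_constraints E p2 l2"
    and link: "link_constraint E F p1 p2"
    and gap1: "gap_multi E C c1 \<eta> l1" and gap2: "gap_multi E C c2 \<eta> l2"
    using base unfolding milp_base_def by auto
  have agree: "l1 m = l2 m" if "m \<in> unaffected E F" for m
    using unaffected_weights_agree[OF sc1 sc2 link] that by (cases m) blast
  have "(\<Sum>m\<in>class_leaves E c1. l1 m * leaf_val E m) >
        (\<Sum>m\<in>class_leaves E c2. l1 m * leaf_val E m) + \<eta>"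
    using gap1 c2 distinct unfolding gap_multi_def by auto
  moreover have "(\<Sum>m\<in>class_leaves E c2. l2 m * leaf_val E m) >
        (\<Sum>m\<in>class_leaves E c1. l2 m * leaf_val E m) + \<eta>"
    using gap2 c1 distinct unfolding gap_multi_def by auto
  ultimately show ?thesis
    unfolding aff_multi_def
    using sum_class_leaves_eq_sum_affected[of E F l1 l2 c1] sum_class_leaves_eq_sum_affected[of E F l2 l1 c2] agree
    by (simp add: sum_subtractf)
qed

theorem theorem4:
  fixes E :: ensemble and C :: nat and F :: "nat set" and c1 c2 :: nat and g \<eta> :: real
  assumes classes: "\<forall>(c, t) \<in> set E. c < C"
    and c1: "c1 < C" and c2: "c2 < C" and distinct: "c1 \<noteq> c2"
    and g: "g > 0" and eta: "\<eta> = ln g"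
  shows "{(p1, p2, l1, l2). milp_base E C F c1 c2 \<eta> p1 p2 l1 l2} =
         {(p1, p2, l1, l2). milp_base E C F c1 c2 \<eta> p1 p2 l1 l2 \<and> aff_multi E F c1 c2 \<eta> l1 l2}"
  using milp_base_imp_aff_multi[OF _ c1 c2 distinct] by auto

end
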